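(* Consider $n$ independent Bernoulli trials, each succeeding with probability $p$, and let $X$ be the number of successes. If $p\ge 1/2$, then $\Pr(X\ge n/2)\ge p$. *)

theory Defs
  imports "HOL-Probability.Probability"
begin

end

theory Submission
  imports Defs
begin

text \<open>
  Let \<open>U n t\<close> be the probability of at least \<open>t\<close> successes in \<open>n\<close> trials.
  Conditioning on the first trial gives \<open>U (n+1) (t+1) = p U n t + (1-p) U n (t+1)\<close>;
  hence \<open>U (n+1) (t+1) \<le> U n t\<close>, which reduces the even case to the odd one.
  Applying the recursion twice,
  \<open>U (2m+3) (m+2) = U (2m+1) (m+1) + p\<^sup>2 b m - (1-p)\<^sup>2 b (m+1)\<close>, where \<open>b k\<close> is the
  probability of exactly \<open>k\<close> successes in \<open>2m+1\<close> trials. By the symmetry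
  \<open>C(2m+1,m) = C(2m+1,m+1)\<close> the correction is \<open>C(2m+1,m) (p(1-p))\<^sup>m\<^sup>+\<^sup>1 (2p-1) \<ge> 0\<close>,
  so induction from \<open>U 1 1 = p\<close> gives \<open>U (2m+1) (m+1) \<ge> p\<close>.
\<close>

lemma prob_binomial_pmf_Suc:
  assumes "0 \<le> p" "p \<le> 1"
  shows "measure_pmf.prob (binomial_pmf (Suc n) p) A =
           p * measure_pmf.prob (binomial_pmf n p) {k. Suc k \<in> A}
         + (1 - p) * measure_pmf.prob (binomial_pmf n p) A"
proof -
  let ?B = "binomial_pmf n p"
  have "emeasure (binomial_pmf (Suc n) p) A =
          (\<integral>\<^sup>+b. emeasure (map_pmf (\<lambda>k. (if b then 1 else 0) + k) ?B) A \<partial>bernoulli_pmf p)"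
    using assms by (simp add: binomial_pmf_Suc map_pmf_def)
  also have "\<dots> = emeasure ?B {k. Suc k \<in> A} * p + emeasure ?B A * (1 - p)"
    using assms by (simp add: vimage_def)
  also have "\<dots> = ennreal (p * measure_pmf.prob ?B {k. Suc k \<in> A} + (1 - p) * measure_pmf.prob ?B A)"
    using assms by (simp add: measure_pmf.emeasure_eq_measure ennreal_plus ennreal_mult mult.commute)
  finally have "ennreal (measure_pmf.prob (binomial_pmf (Suc n) p) A) =
      ennreal (p * measure_pmf.prob ?B {k. Suc k \<in> A} + (1 - p) * measure_pmf.prob ?B A)"
    unfolding measure_pmf.emeasure_eq_measure .
  then show ?thesis
    using assms by (subst (asm) ennreal_inj) auto
qed

lemma prob_binomial_pmf_atLeast_Suc_Suc:
  assumes "0 \<le> p" "p \<le> 1"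
  shows "measure_pmf.prob (binomial_pmf (Suc n) p) {Suc t..} =
           p * measure_pmf.prob (binomial_pmf n p) {t..}
         + (1 - p) * measure_pmf.prob (binomial_pmf n p) {Suc t..}"
proof -
  have "{k. Suc k \<in> {Suc t..}} = {t..}" by auto
  then show ?thesis
    using prob_binomial_pmf_Suc[OF assms, of n "{Suc t..}"] by simp
qed

lemma measure_pmf_atLeast_eq_pmf_plus:
  fixes M :: "nat pmf"
  shows "measure_pmf.prob M {t..} = pmf M t + measure_pmf.prob M {Suc t..}"
proof -
  have "{t..} = {t} \<union> {Suc t..}" by auto
  then show ?thesis
    using measure_pmf.finite_measure_Union[where M = M and A = "{t}" and B = "{Suc t..}"]
    by (simp add: measure_pmf_single)
qed

lemma prob_binomial_pmf_atLeast_Suc_Suc_le: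
  assumes "0 \<le> p" "p \<le> 1"
  shows "measure_pmf.prob (binomial_pmf (Suc n) p) {Suc t..} \<le>
           measure_pmf.prob (binomial_pmf n p) {t..}"
proof -
  have "measure_pmf.prob (binomial_pmf n p) {Suc t..} \<le> measure_pmf.prob (binomial_pmf n p) {t..}"
    by (intro measure_pmf.finite_measure_mono) auto
  then have "(1 - p) * measure_pmf.prob (binomial_pmf n p) {Suc t..} \<le>
               (1 - p) * measure_pmf.prob (binomial_pmf n p) {t..}"
    using assms by (intro mult_left_mono) auto
  then show ?thesis
    using assms by (simp add: prob_binomial_pmf_atLeast_Suc_Suc algebra_simps)
qed

lemma pmf_binomial_odd_middle_le:
  assumes "1/2 \<le> p" "p \<le> 1"
  shows "(1 - p)^2 * pmf (binomial_pmf (2*m+1) p) (m+1) \<le> p^2 * pmf (binomial_pmf (2*m+1) p) m"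
proof -
  define c where "c = real ((2*m+1) choose m)"
  have "(2*m+1) choose (m+1) = (2*m+1) choose m"
    using binomial_symmetric[of m "2*m+1"] by simp
  then have "p^2 * pmf (binomial_pmf (2*m+1) p) m - (1 - p)^2 * pmf (binomial_pmf (2*m+1) p) (m+1)
               = c * p^(m+1) * (1 - p)^(m+1) * (p - (1 - p))"
    using assms by (simp add: c_def Suc_diff_le algebra_simps power2_eq_square)
  also have "\<dots> \<ge> 0"
    using assms by (simp add: c_def)
  finally show ?thesis by simp
qed

lemma prob_binomial_pmf_odd_majority:
  assumes "1/2 \<le> p" "p \<le> 1"
  shows "p \<le> measure_pmf.prob (binomial_pmf (2*m+1) p) {m+1..}"
proof (induction m)
  case 0
  then show ?case
    using assms by (simp add: prob_binomial_pmf_atLeast_Suc_Suc binomial_pmf_0)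
next
  case (Suc m)
  have p: "0 \<le> p" "p \<le> 1" using assms by auto
  define U where "U t = measure_pmf.prob (binomial_pmf (2*m+1) p) {t..}" for t
  define b where "b k = pmf (binomial_pmf (2*m+1) p) k" for k
  have "measure_pmf.prob (binomial_pmf (2*Suc m+1) p) {Suc m+1..}
          = p * (p * U m + (1 - p) * U (m+1)) + (1 - p) * (p * U (m+1) + (1 - p) * U (m+2))"
    using prob_binomial_pmf_atLeast_Suc_Suc[OF p] by (simp add: U_def)
  also have "\<dots> = U (m+1) + (p^2 * b m - (1 - p)^2 * b (m+1))"
    using measure_pmf_atLeast_eq_pmf_plus[of "binomial_pmf (2*m+1) p" m]
      measure_pmf_atLeast_eq_pmf_plus[of "binomial_pmf (2*m+1) p" "m+1"]
    by (simp add: U_def b_def algebra_simps power2_eq_square)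
  also have "\<dots> \<ge> U (m+1)"
    using pmf_binomial_odd_middle_le[OF assms, of m] by (simp add: b_def)
  finally show ?case
    using Suc by (simp add: U_def)
qed

theorem lemma8:
  fixes n :: nat and p :: real
  assumes "p \<le> 1" and "p \<ge> 1/2"
  shows "measure_pmf.prob (binomial_pmf n p) {k. real k \<ge> real n / 2} \<ge> p"
proof (cases "even n")
  case True
  then obtain m where n: "n = 2*m" by blast
  then have "{k. real k \<ge> real n / 2} = {m..}" by auto
  moreover have "measure_pmf.prob (binomial_pmf (2*m+1) p) {m+1..} \<le>
                   measure_pmf.prob (binomial_pmf (2*m) p) {m..}"
    using prob_binomial_pmf_atLeast_Suc_Suc_le[of p "2*m" m] assms by simp
  ultimately show ?thesis
    using prob_binomial_pmf_odd_majority[of p m] assms n by simp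
next
  case False
  then obtain m where n: "n = 2*m+1" using oddE by blast
  then have "{k. real k \<ge> real n / 2} = {m+1..}" by auto
  then show ?thesis
    using prob_binomial_pmf_odd_majority[of p m] assms n by simp
qed

end
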